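(* Let $R\geq 1$ be a real number and let $C,t\in \mathbb N$ be fixed. Consider pairs of sequences $\{\lambda_i\},\{\nu_i\}$ of nonnegative integers such that $\lambda_i\leq t$ for all $i$ and $\sum_{i\geq 1}(R\lambda_i+\nu_i) \leq C$. Under these conditions the maximal value of the expression $$A(\{\lambda\},\{\nu\})=\sum_{i\geq 1}\nu_i(\lambda_i-\nu_i)$$ can be attained by a pair of sequences $\{\lambda_i\},\{\nu_i\}$, $i=1,2,\dots,r$, such that: (i) $\lambda_1\geq \lambda_2 \geq \dots \geq \lambda_r$, $\nu_1\geq \nu_2 \geq \dots \geq \nu_r\geq 1$, and $\lambda_i \geq \nu_i$ for all $i$; (ii) $\lambda_1=\lambda_2 = \dots = \lambda_{r-1}=t$; and (iii) for some $0\leq b\leq r-1$ we have $\nu_1= \nu_2 = \dots = \nu_b=\nu_{b+1}+1=\dots=\nu_{r-1}+1$. If moreover $\lambda_r=t$, then also $\nu_r \in \{\nu_1, \nu_1-1\}$.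
   Context: The sequences $\{\lambda_i\},\{\nu_i\}$ are sequences of nonnegative integers indexed by $i\ge 1$ (with only finitely many nonzero terms, since $\sum_i(R\lambda_i+\nu_i)\le C$). *)

theory Defs
  imports Complex_Main
begin

text \<open>Sequences indexed by i \<ge> 1 are modelled as functions nat \<Rightarrow> nat; the value at index 0 is ignored.\<close>

definition supp2 :: "(nat \<Rightarrow> nat) \<Rightarrow> (nat \<Rightarrow> nat) \<Rightarrow> nat set" where
  "supp2 l n = {i. 1 \<le> i \<and> (l i \<noteq> 0 \<or> n i \<noteq> 0)}"

definition admissible :: "real \<Rightarrow> nat \<Rightarrow> nat \<Rightarrow> (nat \<Rightarrow> nat) \<Rightarrow> (nat \<Rightarrow> nat) \<Rightarrow> bool" where
  "admissible R C t l n \<longleftrightarrow>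
     (\<forall>i\<ge>1. l i \<le> t) \<and> finite (supp2 l n) \<and>
     (\<Sum>i\<in>supp2 l n. R * real (l i) + real (n i)) \<le> real C"

definition Aval :: "(nat \<Rightarrow> nat) \<Rightarrow> (nat \<Rightarrow> nat) \<Rightarrow> int" where
  "Aval l n = (\<Sum>i\<in>supp2 l n. int (n i) * (int (l i) - int (n i)))"

end

(*
  A configuration is a finite multiset of parts (\<lambda>, \<nu>), of gain \<nu>(\<lambda> - \<nu>) and cost R\<lambda> + \<nu>.
  Parts with \<nu> = 0 or \<nu> > \<lambda> have nonpositive gain and can be dropped. Of two parts with
  \<lambda> < t, the one with the larger \<nu> can take over length from the other until it reaches t or
  the other one is used up: the cost is unchanged and the gain does not decrease. Since gains are
  bounded by t C, an optimum therefore exists among configurations of proper parts with at most one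
  part of length below t. At an optimum, neither swapping the \<nu>-values of two parts nor moving a
  unit of \<nu> between two parts of equal length can increase the gain, so \<nu> is monotone in \<lambda>
  and varies by at most one among the parts of length t.
*)

theory Submission
  imports Defs "HOL-Library.Multiset" "HOL-Library.Product_Lexorder"
begin

definition part_gain :: "nat \<times> nat \<Rightarrow> int" where
  "part_gain x = int (snd x) * (int (fst x) - int (snd x))"

definition part_cost :: "real \<Rightarrow> nat \<times> nat \<Rightarrow> real" where
  "part_cost R x = R * real (fst x) + real (snd x)"

definition gain :: "(nat \<times> nat) multiset \<Rightarrow> int" where
  "gain M = (\<Sum>x\<in>#M. part_gain x)"

definition cost :: "real \<Rightarrow> (nat \<times> nat) multiset \<Rightarrow> real" where
  "cost R M = (\<Sum>x\<in>#M. part_cost R x)"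

definition proper_part :: "nat \<Rightarrow> nat \<times> nat \<Rightarrow> bool" where
  "proper_part t x \<longleftrightarrow> 1 \<le> snd x \<and> snd x \<le> fst x \<and> fst x \<le> t"

definition partial_count :: "nat \<Rightarrow> (nat \<times> nat) multiset \<Rightarrow> nat" where
  "partial_count t M = size (filter_mset (\<lambda>x. fst x < t) M)"

lemma gain_empty [simp]: "gain {#} = 0"
  and gain_add_mset [simp]: "gain (add_mset x M) = part_gain x + gain M"
  and gain_union [simp]: "gain (M + N) = gain M + gain N"
  by (simp_all add: gain_def)

lemma cost_empty [simp]: "cost R {#} = 0"
  and cost_add_mset [simp]: "cost R (add_mset x M) = part_cost R x + cost R M"
  and cost_union [simp]: "cost R (M + N) = cost R M + cost R N"
  by (simp_all add: cost_def)

lemma partial_count_empty [simp]: "partial_count t {#} = 0"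
  and partial_count_add_mset [simp]:
    "partial_count t (add_mset x M) = (if fst x < t then Suc (partial_count t M) else partial_count t M)"
  and partial_count_union [simp]: "partial_count t (M + N) = partial_count t M + partial_count t N"
  by (simp_all add: partial_count_def)

lemma part_gain_nonneg: "proper_part t x \<Longrightarrow> 0 \<le> part_gain x"
  by (simp add: part_gain_def proper_part_def)

lemma part_gain_nonpos_if_improper:
  "fst x \<le> t \<Longrightarrow> \<not> proper_part t x \<Longrightarrow> part_gain x \<le> 0"
  by (cases "snd x = 0") (auto simp: part_gain_def proper_part_def mult_nonneg_nonpos)

lemma part_cost_nonneg: "R \<ge> 0 \<Longrightarrow> 0 \<le> part_cost R x"
  by (simp add: part_cost_def)

lemma part_gain_le_part_cost:
  assumes "R \<ge> 0" "proper_part t x"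
  shows "real_of_int (part_gain x) \<le> real t * part_cost R x"
proof -
  have "real_of_int (part_gain x) \<le> real (snd x) * real t"
    using assms(2) by (simp add: part_gain_def proper_part_def of_nat_diff mult_left_mono)
  also have "\<dots> \<le> real t * part_cost R x"
    using assms(1) by (simp add: part_cost_def mult.commute mult_left_mono)
  finally show ?thesis .
qed

lemma gain_nonneg: "\<forall>x\<in>#M. proper_part t x \<Longrightarrow> 0 \<le> gain M"
  by (induction M) (auto dest: part_gain_nonneg)

lemma gain_le_cost:
  assumes "R \<ge> 0" "\<forall>x\<in>#M. proper_part t x"
  shows "real_of_int (gain M) \<le> real t * cost R M"
  using assms(2)
  by (induction M) (auto simp: assms(1) part_gain_le_part_cost distrib_left intro: add_mono)

lemma gain_le_gain_proper_parts:
  assumes "\<forall>x\<in>#M. fst x \<le> t"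
  shows "gain M \<le> gain (filter_mset (proper_part t) M)"
proof -
  have "gain (filter_mset (\<lambda>x. \<not> proper_part t x) M) \<le> 0"
    using assms by (induction M) (auto dest: part_gain_nonpos_if_improper)
  moreover have "gain M = gain (filter_mset (proper_part t) M) + gain (filter_mset (\<lambda>x. \<not> proper_part t x) M)"
    by (metis gain_union multiset_partition)
  ultimately show ?thesis
    by simp
qed

lemma cost_proper_parts_le:
  assumes "R \<ge> 0"
  shows "cost R (filter_mset (proper_part t) M) \<le> cost R M"
proof -
  have "0 \<le> cost R (filter_mset (\<lambda>x. \<not> proper_part t x) M)"
    using part_cost_nonneg[OF assms] by (induction M) (auto intro: add_nonneg_nonneg)
  moreover have "cost R M = cost R (filter_mset (proper_part t) M) + cost R (filter_mset (\<lambda>x. \<not> proper_part t x) M)"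
    by (metis cost_union multiset_partition)
  ultimately show ?thesis
    by simp
qed

lemma merge_partial_parts:
  assumes "R \<ge> 0" and x: "proper_part t x" "fst x < t" and y: "proper_part t y" "fst y < t"
    and "snd y \<le> snd x"
  obtains N where "\<forall>z\<in>#N. proper_part t z" "partial_count t N \<le> 1"
    "part_gain x + part_gain y \<le> gain N" "cost R N \<le> part_cost R x + part_cost R y"
proof
  define k where "k = min (t - fst x) (fst y)"
  define x' y' where "x' = (fst x + k, snd x)" and "y' = (fst y - k, snd y)"
  define N where "N = filter_mset (proper_part t) {#x', y'#}"
  have k: "k \<le> fst y" "fst x + k \<le> t" "fst x + k = t \<or> k = fst y"
    using x by (auto simp: k_def)
  have "part_gain x' + part_gain y' = part_gain x + part_gain y + int k * (int (snd x) - int (snd y))"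
    using k by (simp add: part_gain_def x'_def y'_def of_nat_diff algebra_simps)
  then have "part_gain x + part_gain y \<le> gain {#x', y'#}"
    using \<open>snd y \<le> snd x\<close> by simp
  also have "\<dots> \<le> gain N"
    unfolding N_def using k y by (intro gain_le_gain_proper_parts) (auto simp: x'_def y'_def proper_part_def)
  finally show "part_gain x + part_gain y \<le> gain N" .
  have "cost R N \<le> cost R {#x', y'#}"
    unfolding N_def using \<open>R \<ge> 0\<close> by (rule cost_proper_parts_le)
  also have "\<dots> = part_cost R x + part_cost R y"
    using k by (simp add: part_cost_def x'_def y'_def of_nat_diff algebra_simps)
  finally show "cost R N \<le> part_cost R x + part_cost R y" .
  show "\<forall>z\<in>#N. proper_part t z"
    by (simp add: N_def)
  have "fst x' = t \<or> \<not> proper_part t y'"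
    using k by (auto simp: x'_def y'_def proper_part_def)
  then show "partial_count t N \<le> 1"
    by (auto simp: N_def)
qed

lemma two_partial_partsE:
  assumes "2 \<le> partial_count t M"
  obtains x y rest where "M = add_mset x (add_mset y rest)" "fst x < t" "fst y < t"
proof -
  let ?F = "filter_mset (\<lambda>x. fst x < t) M"
  obtain n where "size ?F = Suc (Suc n)"
    using assms by (auto simp: partial_count_def dest!: le_Suc_ex)
  then obtain x y G where F: "?F = add_mset x (add_mset y G)"
    by (metis size_eq_Suc_imp_eq_union size_add_mset nat.inject)
  have "x \<in># ?F" "y \<in># ?F"
    unfolding F by simp_all
  then have "fst x < t" "fst y < t"
    by simp_all
  moreover have "M = ?F + filter_mset (\<lambda>x. \<not> fst x < t) M"
    by (rule multiset_partition)
  ultimately show thesis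
    using F that by simp
qed

definition optimal_parts :: "real \<Rightarrow> nat \<Rightarrow> nat \<Rightarrow> (nat \<times> nat) multiset \<Rightarrow> bool" where
  "optimal_parts R C t M \<longleftrightarrow> (\<forall>x\<in>#M. fst x \<le> t) \<and> cost R M \<le> real C \<and>
     (\<forall>M'. (\<forall>x\<in>#M'. fst x \<le> t) \<longrightarrow> cost R M' \<le> real C \<longrightarrow> gain M' \<le> gain M)"

lemma max_proper_gain_exists:
  assumes "R \<ge> 0"
  obtains g where "\<exists>M. (\<forall>x\<in>#M. proper_part t x) \<and> cost R M \<le> real C \<and> gain M = g"
    and "\<And>M. \<forall>x\<in>#M. proper_part t x \<Longrightarrow> cost R M \<le> real C \<Longrightarrow> gain M \<le> g"
proof -
  define V where "V = {gain M | M. (\<forall>x\<in>#M. proper_part t x) \<and> cost R M \<le> real C}"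
  have "V \<subseteq> {0..int (t * C)}"
  proof
    fix v assume "v \<in> V"
    then obtain M where M: "v = gain M" "\<forall>x\<in>#M. proper_part t x" "cost R M \<le> real C"
      by (auto simp: V_def)
    have "real_of_int v \<le> real t * cost R M"
      using gain_le_cost[OF assms M(2)] M(1) by simp
    also have "\<dots> \<le> real t * real C"
      using M(3) by (simp add: mult_left_mono)
    finally have "real_of_int v \<le> real_of_int (int (t * C))"
      by simp
    then have "v \<le> int (t * C)"
      by (rule of_int_le_iff[THEN iffD1])
    then show "v \<in> {0..int (t * C)}"
      using gain_nonneg[OF M(2)] M(1) by simp
  qed
  then have "finite V"
    by (rule finite_subset) simp
  moreover have "gain {#} \<in> V"
    unfolding V_def by (intro CollectI exI[of _ "{#}"]) simp
  ultimately have "Max V \<in> V" "\<And>v. v \<in> V \<Longrightarrow> v \<le> Max V"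
    by (auto intro!: Max_in)
  then show thesis
    by (intro that) (auto simp: V_def)
qed

lemma optimal_partsI_proper:
  assumes "R \<ge> 0" "\<forall>x\<in>#M. proper_part t x" "cost R M \<le> real C"
    and "\<And>M'. \<forall>x\<in>#M'. proper_part t x \<Longrightarrow> cost R M' \<le> real C \<Longrightarrow> gain M' \<le> gain M"
  shows "optimal_parts R C t M"
  unfolding optimal_parts_def
proof (intro conjI allI impI)
  show "\<forall>x\<in>#M. fst x \<le> t"
    using assms(2) by (simp add: proper_part_def)
  fix M' assume "\<forall>x\<in>#M'. fst x \<le> t" "cost R M' \<le> real C"
  then have "gain M' \<le> gain (filter_mset (proper_part t) M')"
    "cost R (filter_mset (proper_part t) M') \<le> real C"
    using gain_le_gain_proper_parts cost_proper_parts_le[OF assms(1), of t M'] by auto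
  then show "gain M' \<le> gain M"
    using assms(4)[of "filter_mset (proper_part t) M'"] by simp
qed (fact assms(3))

lemma optimal_parts_exists:
  assumes "R \<ge> 0"
  obtains M where "optimal_parts R C t M" "\<forall>x\<in>#M. proper_part t x" "partial_count t M \<le> 1"
proof -
  obtain g where g_attained: "\<exists>M. (\<forall>x\<in>#M. proper_part t x) \<and> cost R M \<le> real C \<and> gain M = g"
    and g_max: "\<And>M. \<forall>x\<in>#M. proper_part t x \<Longrightarrow> cost R M \<le> real C \<Longrightarrow> gain M \<le> g"
    using max_proper_gain_exists[OF assms] by blast
  define P where "P M \<longleftrightarrow> (\<forall>x\<in>#M. proper_part t x) \<and> cost R M \<le> real C \<and> gain M = g" for M
  obtain M where "P M" and fewest: "\<And>M'. P M' \<Longrightarrow> partial_count t M \<le> partial_count t M'"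
    using ex_has_least_nat[of P _ "partial_count t"] g_attained unfolding P_def by blast
  then have proper: "\<forall>x\<in>#M. proper_part t x" and "cost R M \<le> real C" "gain M = g"
    by (simp_all add: P_def)
  have "optimal_parts R C t M"
    using g_max \<open>gain M = g\<close> by (intro optimal_partsI_proper[OF assms proper \<open>cost R M \<le> real C\<close>]) auto
  moreover have "partial_count t M \<le> 1"
  proof (rule ccontr)
    assume "\<not> partial_count t M \<le> 1"
    then have "2 \<le> partial_count t M"
      by simp
    then obtain x y rest where M: "M = add_mset x (add_mset y rest)" "fst x < t" "fst y < t"
      by (rule two_partial_partsE)
    then have x: "proper_part t x" and y: "proper_part t y" and rest: "\<forall>z\<in>#rest. proper_part t z"
      using proper by simp_all
    obtain N where N: "\<forall>z\<in>#N. proper_part t z" "partial_count t N \<le> 1"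
      "part_gain x + part_gain y \<le> gain N" "cost R N \<le> part_cost R x + part_cost R y"
    proof (cases "snd y \<le> snd x")
      case True
      then show thesis
        using merge_partial_parts[OF assms x \<open>fst x < t\<close> y \<open>fst y < t\<close>] that by blast
    next
      case False
      then obtain N where "\<forall>z\<in>#N. proper_part t z" "partial_count t N \<le> 1"
        "part_gain y + part_gain x \<le> gain N" "cost R N \<le> part_cost R y + part_cost R x"
        using merge_partial_parts[OF assms y \<open>fst y < t\<close> x \<open>fst x < t\<close>] by auto
      then show thesis
        using that[of N] by (simp add: add.commute)
    qed
    have "gain M \<le> gain (N + rest)" "cost R (N + rest) \<le> cost R M"
      using M N by simp_all
    then have "P (N + rest)"
      using g_max[of "N + rest"] N(1) rest \<open>cost R M \<le> real C\<close> \<open>gain M = g\<close>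
      unfolding P_def by auto
    moreover have "partial_count t (N + rest) < partial_count t M"
      using M N by simp
    ultimately show False
      using fewest[of "N + rest"] by simp
  qed
  ultimately show thesis
    using proper that by blast
qed

lemma optimal_parts_exchange:
  assumes "optimal_parts R C t (add_mset x (add_mset y rest))" "fst x' \<le> t" "fst y' \<le> t"
    and "part_cost R x' + part_cost R y' = part_cost R x + part_cost R y"
  shows "part_gain x' + part_gain y' \<le> part_gain x + part_gain y"
proof -
  let ?M' = "add_mset x' (add_mset y' rest)"
  have "\<forall>z\<in>#rest. fst z \<le> t" and cost: "cost R (add_mset x (add_mset y rest)) \<le> real C"
    and max: "\<And>M'. \<forall>z\<in>#M'. fst z \<le> t \<Longrightarrow> cost R M' \<le> real C \<Longrightarrow>
      gain M' \<le> gain (add_mset x (add_mset y rest))"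
    using assms(1) unfolding optimal_parts_def by simp_all
  then have "\<forall>z\<in>#?M'. fst z \<le> t"
    using assms(2,3) by simp
  moreover have "cost R ?M' \<le> real C"
    using cost assms(4) by simp
  ultimately have "gain ?M' \<le> gain (add_mset x (add_mset y rest))"
    by (rule max)
  then show ?thesis
    by simp
qed

lemma optimal_parts_snd_mono:
  assumes "optimal_parts R C t (add_mset x (add_mset y rest))" "fst x < fst y"
  shows "snd x \<le> snd y"
proof (rule ccontr)
  assume "\<not> snd x \<le> snd y"
  define x' y' where "x' = (fst x, snd y)" and "y' = (fst y, snd x)"
  have "fst y \<le> t"
    using assms(1) by (simp add: optimal_parts_def)
  then have "part_gain x' + part_gain y' \<le> part_gain x + part_gain y"
    using assms unfolding x'_def y'_def
    by (intro optimal_parts_exchange[OF assms(1)]) (auto simp: part_cost_def)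
  moreover have "part_gain x' + part_gain y'
      = part_gain x + part_gain y + (int (snd x) - int (snd y)) * (int (fst y) - int (fst x))"
    unfolding x'_def y'_def by (simp add: part_gain_def algebra_simps)
  moreover have "0 < (int (snd x) - int (snd y)) * (int (fst y) - int (fst x))"
    using assms(2) \<open>\<not> snd x \<le> snd y\<close> by (intro mult_pos_pos) auto
  ultimately show False
    by linarith
qed

lemma optimal_parts_snd_balanced:
  assumes "optimal_parts R C t (add_mset x (add_mset y rest))" "fst x = fst y"
  shows "snd x \<le> snd y + 1"
proof (rule ccontr)
  assume "\<not> snd x \<le> snd y + 1"
  define x' y' where "x' = (fst x, snd x - 1)" and "y' = (fst y, snd y + 1)"
  have "fst x \<le> t"
    using assms(1) by (simp add: optimal_parts_def)
  then have "part_gain x' + part_gain y' \<le> part_gain x + part_gain y"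
    using assms \<open>\<not> snd x \<le> snd y + 1\<close> unfolding x'_def y'_def
    by (intro optimal_parts_exchange[OF assms(1)]) (auto simp: part_cost_def of_nat_diff)
  moreover have "part_gain x' + part_gain y' = part_gain x + part_gain y + 2 * (int (snd x) - int (snd y) - 1)"
    using assms(2) \<open>\<not> snd x \<le> snd y + 1\<close> unfolding x'_def y'_def
    by (simp add: part_gain_def of_nat_diff algebra_simps)
  moreover have "0 < 2 * (int (snd x) - int (snd y) - 1)"
    using \<open>\<not> snd x \<le> snd y + 1\<close> by simp
  ultimately show False
    by linarith
qed

definition parts_mset :: "(nat \<Rightarrow> nat) \<Rightarrow> (nat \<Rightarrow> nat) \<Rightarrow> (nat \<times> nat) multiset" where
  "parts_mset l n = image_mset (\<lambda>i. (l i, n i)) (mset_set (supp2 l n))"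

lemma Aval_eq_gain_parts_mset: "Aval l n = gain (parts_mset l n)"
  by (simp add: Aval_def gain_def parts_mset_def part_gain_def sum_unfold_sum_mset multiset.map_comp o_def)

lemma cost_parts_mset: "cost R (parts_mset l n) = (\<Sum>i\<in>supp2 l n. R * real (l i) + real (n i))"
  by (simp add: cost_def parts_mset_def part_cost_def sum_unfold_sum_mset multiset.map_comp o_def)

lemma admissible_iff_cost_parts_mset:
  "admissible R C t l n \<longleftrightarrow> (\<forall>i\<ge>1. l i \<le> t) \<and> finite (supp2 l n) \<and> cost R (parts_mset l n) \<le> real C"
  by (simp add: admissible_def cost_parts_mset)

lemma Aval_le_if_optimal_parts:
  assumes "optimal_parts R C t M" "admissible R C t l n"
  shows "Aval l n \<le> gain M"
proof -
  have "\<forall>x\<in>#parts_mset l n. fst x \<le> t"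
    using assms(2) by (auto simp: admissible_def parts_mset_def supp2_def)
  moreover have "cost R (parts_mset l n) \<le> real C"
    using assms(2) by (simp add: admissible_iff_cost_parts_mset)
  ultimately show ?thesis
    using assms(1) by (simp add: optimal_parts_def Aval_eq_gain_parts_mset)
qed

definition parts_seq :: "(nat \<times> nat) list \<Rightarrow> nat \<Rightarrow> nat \<times> nat" where
  "parts_seq xs i = (if 1 \<le> i \<and> i \<le> length xs then xs ! (i - 1) else (0, 0))"

lemma parts_seq_in_set: "1 \<le> i \<Longrightarrow> i \<le> length xs \<Longrightarrow> parts_seq xs i \<in> set xs"
  by (simp add: parts_seq_def)

lemma supp2_parts_seq:
  assumes "\<forall>x\<in>set xs. 1 \<le> snd x"
  shows "supp2 (\<lambda>i. fst (parts_seq xs i)) (\<lambda>i. snd (parts_seq xs i)) = {1..length xs}"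
  using assms parts_seq_in_set[of _ xs] by (fastforce simp: supp2_def parts_seq_def)

lemma parts_mset_parts_seq:
  assumes "\<forall>x\<in>set xs. 1 \<le> snd x"
  shows "parts_mset (\<lambda>i. fst (parts_seq xs i)) (\<lambda>i. snd (parts_seq xs i)) = mset xs"
proof -
  have "map (parts_seq xs) [1..<Suc (length xs)] = xs"
    by (rule nth_equalityI) (simp_all add: parts_seq_def del: upt_Suc)
  moreover have "mset_set {1..length xs} = mset [1..<Suc (length xs)]"
    by (simp only: mset_upt atLeastLessThanSuc_atLeastAtMost)
  ultimately show ?thesis
    unfolding parts_mset_def supp2_parts_seq[OF assms] by (simp flip: mset_map)
qed

lemma mset_nth_pair:
  assumes "p < q" "q < length xs"
  shows "\<exists>rest. mset xs = add_mset (xs ! p) (add_mset (xs ! q) rest)"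
proof -
  let ?T = "mset (take q xs)"
  have "mset xs = ?T + add_mset (xs ! q) (mset (drop (Suc q) xs))"
    using assms by (subst id_take_nth_drop[of q xs]) simp_all
  moreover have "xs ! p \<in># ?T"
    using assms nth_mem[of p "take q xs"] by simp
  then have "?T = add_mset (xs ! p) (?T - {#xs ! p#})"
    by (rule insert_DiffM[symmetric])
  ultimately have "mset xs = add_mset (xs ! p) (add_mset (xs ! q) (?T - {#xs ! p#} + mset (drop (Suc q) xs)))"
    by simp
  then show ?thesis ..
qed

lemma mset_parts_seq_pair:
  assumes "1 \<le> i" "i < j" "j \<le> length xs"
  shows "\<exists>rest. mset xs = add_mset (parts_seq xs i) (add_mset (parts_seq xs j) rest)"
  using mset_nth_pair[of "i - 1" "j - 1" xs] assms by (simp add: parts_seq_def)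

definition staircase :: "nat \<Rightarrow> (nat \<Rightarrow> nat) \<Rightarrow> (nat \<Rightarrow> nat) \<Rightarrow> nat \<Rightarrow> bool" where
  "staircase t l n r \<longleftrightarrow>
    (\<forall>i j. 1 \<le> i \<and> i \<le> j \<and> j \<le> r \<longrightarrow> l j \<le> l i \<and> n j \<le> n i) \<and>
    n r \<ge> 1 \<and>
    (\<forall>i. 1 \<le> i \<and> i \<le> r \<longrightarrow> n i \<le> l i) \<and>
    (\<forall>i. 1 \<le> i \<and> i \<le> r - 1 \<longrightarrow> l i = t) \<and>
    (\<exists>b c. b \<le> r - 1 \<and>
       (\<forall>i. 1 \<le> i \<and> i \<le> b \<longrightarrow> n i = c) \<and>
       (\<forall>i. b + 1 \<le> i \<and> i \<le> r - 1 \<longrightarrow> n i + 1 = c)) \<and>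
    (l r = t \<longrightarrow> n r = n 1 \<or> n r = n 1 - 1)"

lemma antimono_two_valued_step:
  fixes f :: "nat \<Rightarrow> nat"
  assumes "\<And>i j. 1 \<le> i \<Longrightarrow> i \<le> j \<Longrightarrow> j \<le> m \<Longrightarrow> f j \<le> f i"
    and "\<And>i. 1 \<le> i \<Longrightarrow> i \<le> m \<Longrightarrow> f i = c \<or> f i + 1 = c"
  shows "\<exists>b\<le>m. (\<forall>i. 1 \<le> i \<and> i \<le> b \<longrightarrow> f i = c) \<and> (\<forall>i. b + 1 \<le> i \<and> i \<le> m \<longrightarrow> f i + 1 = c)"
  using assms
proof (induction m)
  case 0
  then show ?case by auto
next
  case (Suc m)
  then obtain b where b: "b \<le> m" "\<forall>i. 1 \<le> i \<and> i \<le> b \<longrightarrow> f i = c"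
    "\<forall>i. b + 1 \<le> i \<and> i \<le> m \<longrightarrow> f i + 1 = c"
    by (metis le_SucI)
  show ?case
  proof (cases "f (Suc m) = c")
    case True
    have "f i = c" if "1 \<le> i" "i \<le> Suc m" for i
      using Suc.prems(1)[of i "Suc m"] Suc.prems(2)[of i] True that by auto
    then show ?thesis
      by (intro exI[of _ "Suc m"]) auto
  next
    case False
    then have "f (Suc m) + 1 = c"
      using Suc.prems(2)[of "Suc m"] by simp
    then show ?thesis
      using b by (intro exI[of _ b]) (auto simp: le_Suc_eq)
  qed
qed

lemma staircaseI:
  assumes "1 \<le> r"
    and lex: "\<And>i j. 1 \<le> i \<Longrightarrow> i \<le> j \<Longrightarrow> j \<le> r \<Longrightarrow> (l j, n j) \<le> (l i, n i)"
    and proper: "\<And>i. 1 \<le> i \<Longrightarrow> i \<le> r \<Longrightarrow> proper_part t (l i, n i)"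
    and one_partial: "\<And>i j. 1 \<le> i \<Longrightarrow> i < j \<Longrightarrow> j \<le> r \<Longrightarrow> l i = t \<or> l j = t"
    and snd_mono: "\<And>i j. 1 \<le> i \<Longrightarrow> i < j \<Longrightarrow> j \<le> r \<Longrightarrow> l j < l i \<Longrightarrow> n j \<le> n i"
    and balanced: "\<And>i j. 1 \<le> i \<Longrightarrow> i < j \<Longrightarrow> j \<le> r \<Longrightarrow> l i = l j \<Longrightarrow> n i \<le> n j + 1"
  shows "staircase t l n r"
proof -
  have mono: "l j \<le> l i \<and> n j \<le> n i" if "1 \<le> i" "i \<le> j" "j \<le> r" for i j
    using lex[OF that] snd_mono[of i j] that by (cases "i = j") (auto simp: less_eq_prod_def)
  have full: "l i = t" if "1 \<le> i" "i \<le> r - 1" for i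
  proof -
    have "i < r"
      using that by simp
    then show ?thesis
      using one_partial[of i r] mono[of i r] proper[of i] that by (auto simp: proper_part_def)
  qed
  have near_top: "n i = n 1 \<or> n i + 1 = n 1" if "1 \<le> i" "i \<le> r" "l 1 = l i" for i
    using mono[of 1 i] balanced[of 1 i] that by (cases "i = 1") auto
  have step: "\<exists>b\<le>r - 1. (\<forall>i. 1 \<le> i \<and> i \<le> b \<longrightarrow> n i = n 1) \<and>
      (\<forall>i. b + 1 \<le> i \<and> i \<le> r - 1 \<longrightarrow> n i + 1 = n 1)"
  proof (rule antimono_two_valued_step)
    show "n j \<le> n i" if "1 \<le> i" "i \<le> j" "j \<le> r - 1" for i j
      using mono[of i j] that by simp
    show "n i = n 1 \<or> n i + 1 = n 1" if "1 \<le> i" "i \<le> r - 1" for i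
      using near_top[of i] full[of 1] full[of i] that by simp
  qed
  have last: "n r = n 1 \<or> n r = n 1 - 1" if "l r = t"
    using near_top[of r] full[of 1] that \<open>1 \<le> r\<close> by (cases "r = 1") auto
  show ?thesis
    unfolding staircase_def
  proof (intro conjI allI impI)
    show "\<exists>b c. b \<le> r - 1 \<and> (\<forall>i. 1 \<le> i \<and> i \<le> b \<longrightarrow> n i = c) \<and>
        (\<forall>i. b + 1 \<le> i \<and> i \<le> r - 1 \<longrightarrow> n i + 1 = c)"
      using step by blast
  qed (use mono full last proper[of r] proper \<open>1 \<le> r\<close> in \<open>auto simp: proper_part_def\<close>)
qed

lemma staircase_sorted_optimal_parts:
  assumes "optimal_parts R C t M" "\<forall>x\<in>#M. proper_part t x" "partial_count t M \<le> 1"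
    and "xs = rev (sorted_list_of_multiset M)" "1 \<le> length xs"
  shows "staircase t (\<lambda>i. fst (parts_seq xs i)) (\<lambda>i. snd (parts_seq xs i)) (length xs)"
proof (rule staircaseI)
  have "mset xs = M"
    using assms(4) by simp
  then have pair: "\<exists>rest. M = add_mset (parts_seq xs i) (add_mset (parts_seq xs j) rest)"
    "\<exists>rest. M = add_mset (parts_seq xs j) (add_mset (parts_seq xs i) rest)"
    if "1 \<le> i" "i < j" "j \<le> length xs" for i j
    using mset_parts_seq_pair[OF that] by (metis add_mset_commute)+
  show "(fst (parts_seq xs j), snd (parts_seq xs j)) \<le> (fst (parts_seq xs i), snd (parts_seq xs i))"
    if "1 \<le> i" "i \<le> j" "j \<le> length xs" for i j
    using sorted_rev_nth_mono[of xs "i - 1" "j - 1"] assms(4) that by (simp add: parts_seq_def)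
  show "proper_part t (fst (parts_seq xs i), snd (parts_seq xs i))" if "1 \<le> i" "i \<le> length xs" for i
    using parts_seq_in_set[OF that] assms(2,4) by simp
  show "fst (parts_seq xs i) = t \<or> fst (parts_seq xs j) = t"
    if "1 \<le> i" "i < j" "j \<le> length xs" for i j
  proof (rule ccontr)
    assume "\<not> (fst (parts_seq xs i) = t \<or> fst (parts_seq xs j) = t)"
    moreover have "fst (parts_seq xs i) \<le> t" "fst (parts_seq xs j) \<le> t"
      using parts_seq_in_set[of _ xs] that assms(2,4) by (simp_all add: proper_part_def)
    ultimately have "2 \<le> partial_count t M"
      using pair(1)[OF that] by auto
    then show False
      using assms(3) by simp
  qed
  show "snd (parts_seq xs j) \<le> snd (parts_seq xs i)"
    if "1 \<le> i" "i < j" "j \<le> length xs" "fst (parts_seq xs j) < fst (parts_seq xs i)" for i j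
    using pair(2)[OF that(1-3)] optimal_parts_snd_mono assms(1) that(4) by metis
  show "snd (parts_seq xs i) \<le> snd (parts_seq xs j) + 1"
    if "1 \<le> i" "i < j" "j \<le> length xs" "fst (parts_seq xs i) = fst (parts_seq xs j)" for i j
    using pair(1)[OF that(1-3)] optimal_parts_snd_balanced assms(1) that(4) by metis
qed (fact assms(5))

theorem proposition7p1:
  fixes R :: real and C t :: nat
  assumes "R \<ge> 1"
  shows "\<exists>l n r.
    admissible R C t l n \<and>
    (\<forall>l' n'. admissible R C t l' n' \<longrightarrow> Aval l' n' \<le> Aval l n) \<and>
    (\<forall>i>r. l i = 0 \<and> n i = 0) \<and>
    (r \<ge> 1 \<longrightarrow>
      (\<forall>i j. 1 \<le> i \<and> i \<le> j \<and> j \<le> r \<longrightarrow> l j \<le> l i \<and> n j \<le> n i) \<and>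
      n r \<ge> 1 \<and>
      (\<forall>i. 1 \<le> i \<and> i \<le> r \<longrightarrow> n i \<le> l i) \<and>
      (\<forall>i. 1 \<le> i \<and> i \<le> r - 1 \<longrightarrow> l i = t) \<and>
      (\<exists>b c. b \<le> r - 1 \<and>
         (\<forall>i. 1 \<le> i \<and> i \<le> b \<longrightarrow> n i = c) \<and>
         (\<forall>i. b + 1 \<le> i \<and> i \<le> r - 1 \<longrightarrow> n i + 1 = c)) \<and>
      (l r = t \<longrightarrow> n r = n 1 \<or> n r = n 1 - 1))"
proof -
  obtain M where M: "optimal_parts R C t M" "\<forall>x\<in>#M. proper_part t x" "partial_count t M \<le> 1"
    using optimal_parts_exists[of R] assms by auto
  define xs where "xs = rev (sorted_list_of_multiset M)"
  define l n where "l = (\<lambda>i. fst (parts_seq xs i))" and "n = (\<lambda>i. snd (parts_seq xs i))"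
  have proper: "\<forall>x\<in>set xs. proper_part t x"
    using M(2) by (simp add: xs_def)
  then have "\<forall>x\<in>set xs. 1 \<le> snd x"
    by (simp add: proper_part_def)
  then have parts: "parts_mset l n = M" and supp: "supp2 l n = {1..length xs}"
    using parts_mset_parts_seq supp2_parts_seq unfolding l_def n_def by (simp_all add: xs_def)
  have le_t: "\<forall>i\<ge>1. l i \<le> t"
    using proper parts_seq_in_set[of _ xs] by (auto simp: l_def proper_part_def parts_seq_def)
  have "admissible R C t l n"
    using M(1) le_t parts supp by (simp add: admissible_iff_cost_parts_mset optimal_parts_def)
  moreover have "\<forall>l' n'. admissible R C t l' n' \<longrightarrow> Aval l' n' \<le> Aval l n"
    using Aval_le_if_optimal_parts[OF M(1)] by (simp add: Aval_eq_gain_parts_mset parts)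
  moreover have "\<forall>i>length xs. l i = 0 \<and> n i = 0"
    by (simp add: l_def n_def parts_seq_def)
  moreover have "1 \<le> length xs \<longrightarrow> staircase t l n (length xs)"
    using staircase_sorted_optimal_parts[OF M xs_def] unfolding l_def n_def by blast
  ultimately show ?thesis
    unfolding staircase_def by (intro exI[of _ l] exI[of _ n] exI[of _ "length xs"]) blast
qed

end
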